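(* There exists a language which is accepted by a GRLOWJFA but not by any ROWJFA, and hence ROWJ ⊂ GRLOWJ (proper inclusion).
   Context: A right one-way jumping finite automaton (ROWJFA) is a tuple A = (Σ, Q, q_0, F, R) with alphabet Σ, finite state set Q, start state q_0, final states F ⊆ Q, and rules R ⊆ Q × Σ × Q such that for each p ∈ Q and a ∈ Σ there is at most one q with (p,a,q) ∈ R. For p ∈ Q let Σ_p = {b ∈ Σ : (p,b,q) ∈ R for some q}. Configurations are strings in QΣ^*; for (p,a,q) ∈ R, x ∈ (Σ \ Σ_p)^* and y ∈ Σ^*, the automaton moves from pxay to qyx. The accepted language is the set of words w with q_0 w ⇒^* q_f for some q_f ∈ F. A generalized right linear one-way jumping finite automaton (GRLOWJFA) is a tuple A = (Σ, Q, q_0, F, R) where R ⊂ Q × Σ^+ × Q is finite and for each p ∈ Q and w ∈ Σ^+ there is at most one q with (p,w,q) ∈ R (rule (p,w,q): from p, delete w, go to q). For p ∈ Q let Σ_p = {w ∈ Σ^+ : (p,w,q) ∈ R for some q}. Configurations are strings in Σ^* Q Σ^*, and the moves are: (1) for t,u,v ∈ Σ^* and (p,x,q) ∈ R, tpuxv ⇒ tuqv, provided u contains no word of Σ_p as a subword and there is no nonempty suffix u_2 of u and nonempty prefix x_1 of x with u_2x_1 = x; (2) for x ∈ Σ^+ and y ∈ Σ^* such that y contains no word of Σ_p as a subword, xpy ⇒ pxy. The accepted language is {w ∈ Σ^* : q_0 w ⇒^* q_f for some q_f ∈ F}. ROWJ and GRLOWJ denote the classes of languages accepted by ROWJFA and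 GRLOWJFA respectively. A ROWJFA is exactly a GRLOWJFA all of whose rules delete words of length 1, so ROWJ ⊆ GRLOWJ. *)

theory Defs
  imports Main "HOL-Library.Sublist"
begin

record ('a, 'q) rowjfa =
  r_alph   :: "'a set"
  r_states :: "'q set"
  r_start  :: "'q"
  r_finals :: "'q set"
  r_rules  :: "('q \<times> 'a \<times> 'q) set"

definition rowjfa_wf :: "('a, 'q) rowjfa \<Rightarrow> bool" where
  "rowjfa_wf A \<longleftrightarrow>
     finite (r_alph A) \<and> finite (r_states A) \<and> r_start A \<in> r_states A \<and>
     r_finals A \<subseteq> r_states A \<and>
     r_rules A \<subseteq> r_states A \<times> r_alph A \<times> r_states A \<and>
     (\<forall>p a q q'. (p, a, q) \<in> r_rules A \<longrightarrow> (p, a, q') \<in> r_rules A \<longrightarrow> q = q')"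

definition r_sigma :: "('a, 'q) rowjfa \<Rightarrow> 'q \<Rightarrow> 'a set" where
  "r_sigma A p = {b. \<exists>q. (p, b, q) \<in> r_rules A}"

inductive rowj_step :: "('a, 'q) rowjfa \<Rightarrow> 'q \<times> 'a list \<Rightarrow> 'q \<times> 'a list \<Rightarrow> bool"
  for A where
  "(p, a, q) \<in> r_rules A \<Longrightarrow> set x \<subseteq> r_alph A - r_sigma A p \<Longrightarrow>
   rowj_step A (p, x @ a # y) (q, y @ x)"

definition rowj_lang :: "('a, 'q) rowjfa \<Rightarrow> 'a list set" where
  "rowj_lang A = {w. w \<in> lists (r_alph A) \<and>
      (\<exists>qf \<in> r_finals A. (rowj_step A)\<^sup>*\<^sup>* (r_start A, w) (qf, []))}"

record ('a, 'q) grlowjfa =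
  g_alph   :: "'a set"
  g_states :: "'q set"
  g_start  :: "'q"
  g_finals :: "'q set"
  g_rules  :: "('q \<times> 'a list \<times> 'q) set"

definition grlowjfa_wf :: "('a, 'q) grlowjfa \<Rightarrow> bool" where
  "grlowjfa_wf A \<longleftrightarrow>
     finite (g_alph A) \<and> finite (g_states A) \<and> g_start A \<in> g_states A \<and>
     g_finals A \<subseteq> g_states A \<and> finite (g_rules A) \<and>
     (\<forall>(p, w, q) \<in> g_rules A. p \<in> g_states A \<and> q \<in> g_states A \<and>
        w \<noteq> [] \<and> w \<in> lists (g_alph A)) \<and>
     (\<forall>p w q q'. (p, w, q) \<in> g_rules A \<longrightarrow> (p, w, q') \<in> g_rules A \<longrightarrow> q = q')"

definition g_sigma :: "('a, 'q) grlowjfa \<Rightarrow> 'q \<Rightarrow> 'a list set" where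
  "g_sigma A p = {w. \<exists>q. (p, w, q) \<in> g_rules A}"

definition avoids :: "('a, 'q) grlowjfa \<Rightarrow> 'q \<Rightarrow> 'a list \<Rightarrow> bool" where
  "avoids A p u \<longleftrightarrow> (\<forall>w \<in> g_sigma A p. \<not> sublist w u)"

inductive grlowj_step :: "('a, 'q) grlowjfa \<Rightarrow> 'a list \<times> 'q \<times> 'a list \<Rightarrow>
    'a list \<times> 'q \<times> 'a list \<Rightarrow> bool" for A where
  jump: "(p, x, q) \<in> g_rules A \<Longrightarrow> avoids A p u \<Longrightarrow>
   \<not> (\<exists>u2 x1. u2 \<noteq> [] \<and> x1 \<noteq> [] \<and> suffix u2 u \<and> prefix x1 x \<and> u2 @ x1 = x) \<Longrightarrow>
   grlowj_step A (t, p, u @ x @ v) (t @ u, q, v)"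
| wrap: "x \<noteq> [] \<Longrightarrow> avoids A p y \<Longrightarrow> grlowj_step A (x, p, y) ([], p, x @ y)"

definition grlowj_lang :: "('a, 'q) grlowjfa \<Rightarrow> 'a list set" where
  "grlowj_lang A = {w. w \<in> lists (g_alph A) \<and>
      (\<exists>qf \<in> g_finals A. (grlowj_step A)\<^sup>*\<^sup>* ([], g_start A, w) ([], qf, []))}"

definition ROWJ :: "'a list set set" where
  "ROWJ = {L. \<exists>A :: ('a, nat) rowjfa. rowjfa_wf A \<and> L = rowj_lang A}"

definition GRLOWJ :: "'a list set set" where
  "GRLOWJ = {L. \<exists>A :: ('a, nat) grlowjfa. grlowjfa_wf A \<and> L = grlowj_lang A}"

end

(* The one-state automaton G01 that deletes the factor 01 accepts every word 0^n 1^n, and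
   every word it accepts is balanced (0 opening, 1 closing bracket).  Suppose a ROWJFA accepts
   the same language.  After reading 0^i it must be in a state whose residual language is that
   of 0^i: in that state 0 cannot be jumped over, since otherwise 0 1^(i+1) and 1^(i+1) 0 would
   be accepted alike, so 0 is read deterministically.  Two of these infinitely many residual
   states coincide, say for i \<noteq> j, and then 0^j 1^i is accepted.  For the inclusion, a ROWJFA
   is simulated by the GRLOWJFA with the same rules on one-letter words. *)

theory Submission
  imports Defs
begin

lemma append_eq_append_Cons_split:
  "y @ t = x @ c # z \<Longrightarrow>
   (\<exists>y'. y = x @ c # y' \<and> z = y' @ t) \<or> (\<exists>x'. x = y @ x' \<and> t = x' @ c # z)"
  by (induction y arbitrary: x) (auto simp: Cons_eq_append_conv)

lemma sublist_singleton_left: "sublist [x] ys \<longleftrightarrow> x \<in> set ys"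
  by (simp add: sublist_def in_set_conv_decomp)

lemma count_list_replicate: "count_list (replicate n x) y = (if x = y then n else 0)"
  by (induction n) auto

definition rowj_accepts :: "('a, 'q) rowjfa \<Rightarrow> 'q \<Rightarrow> 'a list \<Rightarrow> bool" where
  "rowj_accepts A p w \<longleftrightarrow> (\<exists>qf \<in> r_finals A. (rowj_step A)\<^sup>*\<^sup>* (p, w) (qf, []))"

lemma rowj_lang_iff_accepts:
  "w \<in> rowj_lang A \<longleftrightarrow> w \<in> lists (r_alph A) \<and> rowj_accepts A (r_start A) w"
  by (simp add: rowj_lang_def rowj_accepts_def)

lemma rowj_accepts_iff_step:
  assumes "w \<noteq> []"
  shows "rowj_accepts A p w \<longleftrightarrow> (\<exists>q w'. rowj_step A (p, w) (q, w') \<and> rowj_accepts A q w')"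
proof
  assume "rowj_accepts A p w"
  then obtain qf where qf: "qf \<in> r_finals A" "(rowj_step A)\<^sup>*\<^sup>* (p, w) (qf, [])"
    by (auto simp: rowj_accepts_def)
  from qf(2) assms obtain c where "rowj_step A (p, w) c" "(rowj_step A)\<^sup>*\<^sup>* c (qf, [])"
    by (cases rule: converse_rtranclpE) auto
  with qf(1) show "\<exists>q w'. rowj_step A (p, w) (q, w') \<and> rowj_accepts A q w'"
    by (cases c) (auto simp: rowj_accepts_def)
qed (auto simp: rowj_accepts_def intro: converse_rtranclp_into_rtranclp)

lemma rowj_step_swap_iff:
  assumes y: "set y \<subseteq> r_alph A - r_sigma A p"
  shows "rowj_step A (p, x @ y) c \<longleftrightarrow> rowj_step A (p, y @ x) c"
proof
  assume "rowj_step A (p, x @ y) c"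
  then obtain x1 b x2 q where step: "(p, b, q) \<in> r_rules A" "set x1 \<subseteq> r_alph A - r_sigma A p"
      "x @ y = x1 @ b # x2" "c = (q, x2 @ x1)"
    by (cases rule: rowj_step.cases) auto
  have "b \<notin> set y" using step(1) y by (auto simp: r_sigma_def)
  with append_eq_append_Cons_split[OF step(3)] obtain x3 where "x = x1 @ b # x3" "x2 = x3 @ y"
    by auto
  moreover have "rowj_step A (p, (y @ x1) @ b # x3) (q, x3 @ (y @ x1))"
    by (rule rowj_step.intros[OF step(1)]) (use step(2) y in auto)
  ultimately show "rowj_step A (p, y @ x) c" using step(4) by simp
next
  assume "rowj_step A (p, y @ x) c"
  then obtain x1 b x2 q where step: "(p, b, q) \<in> r_rules A" "set x1 \<subseteq> r_alph A - r_sigma A p"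
      "y @ x = x1 @ b # x2" "c = (q, x2 @ x1)"
    by (cases rule: rowj_step.cases) auto
  have "b \<notin> set y" using step(1) y by (auto simp: r_sigma_def)
  with append_eq_append_Cons_split[OF step(3)] obtain x3 where "x1 = y @ x3" "x = x3 @ b # x2"
    by auto
  moreover have "rowj_step A (p, x3 @ b # (x2 @ y)) (q, (x2 @ y) @ x3)"
    by (rule rowj_step.intros[OF step(1)]) (use step(2) \<open>x1 = y @ x3\<close> in auto)
  ultimately show "rowj_step A (p, x @ y) c" using step(4) by simp
qed

lemma rowj_accepts_swap_iff:
  assumes "set y \<subseteq> r_alph A - r_sigma A p"
  shows "rowj_accepts A p (x @ y) \<longleftrightarrow> rowj_accepts A p (y @ x)"
  using rowj_accepts_iff_step[of "x @ y" A p] rowj_accepts_iff_step[of "y @ x" A p]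
    rowj_step_swap_iff[OF assms] by (cases "x @ y = []") auto

lemma rowj_step_read_iff:
  assumes "rowjfa_wf A" "(p, a, q) \<in> r_rules A"
  shows "rowj_step A (p, a # w) c \<longleftrightarrow> c = (q, w)"
proof
  assume "rowj_step A (p, a # w) c"
  then obtain x b y q' where step: "(p, b, q') \<in> r_rules A" "set x \<subseteq> r_alph A - r_sigma A p"
      "a # w = x @ b # y" "c = (q', y @ x)"
    by (cases rule: rowj_step.cases) auto
  have "a \<in> r_sigma A p" using assms(2) by (auto simp: r_sigma_def)
  with step(2,3) have "x = []" by (cases x) auto
  with step assms show "c = (q, w)" by (auto simp: rowjfa_wf_def)
qed (use rowj_step.intros[OF assms(2), of "[]" w] in simp)

lemma rowj_accepts_read_iff:
  assumes "rowjfa_wf A" "(p, a, q) \<in> r_rules A"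
  shows "rowj_accepts A p (a # w) \<longleftrightarrow> rowj_accepts A q w"
  using rowj_accepts_iff_step[of "a # w" A p] rowj_step_read_iff[OF assms] by auto

section \<open>A pumping argument for right one-way jumping automata\<close>

definition residual_state :: "('a, 'q) rowjfa \<Rightarrow> 'q \<Rightarrow> 'a list \<Rightarrow> bool" where
  "residual_state A p u \<longleftrightarrow> p \<in> r_states A \<and>
     (\<forall>z \<in> lists (r_alph A). rowj_accepts A p z \<longleftrightarrow> u @ z \<in> rowj_lang A)"

lemma residual_state_Nil: "rowjfa_wf A \<Longrightarrow> residual_state A (r_start A) []"
  by (auto simp: residual_state_def rowjfa_wf_def rowj_lang_iff_accepts)

lemma residual_state_snoc:
  assumes wf: "rowjfa_wf A" and p: "residual_state A p u"
    and a: "a \<in> r_alph A" and z: "z \<in> lists (r_alph A)"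
    and "u @ a # z \<in> rowj_lang A" and "u @ z @ [a] \<notin> rowj_lang A"
  shows "\<exists>q. residual_state A q (u @ [a])"
proof -
  have "a \<in> r_sigma A p"
  proof (rule ccontr)
    assume "a \<notin> r_sigma A p"
    then have "rowj_accepts A p (z @ [a]) \<longleftrightarrow> rowj_accepts A p (a # z)"
      using a rowj_accepts_swap_iff[of "[a]" A p z] by simp
    with p a z assms(5,6) show False by (auto simp: residual_state_def)
  qed
  then obtain q where q: "(p, a, q) \<in> r_rules A" by (auto simp: r_sigma_def)
  have "q \<in> r_states A" using wf q by (auto simp: rowjfa_wf_def)
  moreover have "rowj_accepts A q z' \<longleftrightarrow> (u @ [a]) @ z' \<in> rowj_lang A"
    if "z' \<in> lists (r_alph A)" for z'
    using rowj_accepts_read_iff[OF wf q, of z'] p a that by (auto simp: residual_state_def)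
  ultimately show ?thesis by (auto simp: residual_state_def)
qed

lemma rowj_lang_unequal_powers:
  assumes wf: "rowjfa_wf A"
    and equal_powers: "\<And>n. replicate n a @ replicate n b \<in> rowj_lang A"
    and "\<And>i. replicate i a @ replicate (Suc i) b @ [a] \<notin> rowj_lang A"
  shows "\<exists>i j. i \<noteq> j \<and> replicate i a @ replicate j b \<in> rowj_lang A"
proof -
  have ab: "a \<in> r_alph A" "b \<in> r_alph A"
    using equal_powers[of 1] by (auto simp: rowj_lang_def)
  have "\<exists>p. residual_state A p (replicate i a)" for i
  proof (induction i)
    case 0
    show ?case using residual_state_Nil[OF wf] by auto
  next
    case (Suc i)
    then obtain p where p: "residual_state A p (replicate i a)" by blast
    have "replicate (Suc i) b \<in> lists (r_alph A)" using ab(2) by (simp add: in_lists_conv_set)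
    moreover have "replicate i a @ a # replicate (Suc i) b \<in> rowj_lang A"
      using equal_powers[of "Suc i"] by (simp add: replicate_app_Cons_same)
    ultimately obtain q where "residual_state A q (replicate i a @ [a])"
      using residual_state_snoc[OF wf p ab(1)] assms(3)[of i] by blast
    then show ?case by (auto simp: replicate_append_same)
  qed
  then obtain f where f: "\<And>i. residual_state A (f i) (replicate i a)" by metis
  have "range f \<subseteq> r_states A" using f by (auto simp: residual_state_def)
  with wf have "finite (range f)" by (auto simp: rowjfa_wf_def intro: finite_subset)
  then have "\<not> inj f" using finite_imageD by blast
  then obtain i j where "i \<noteq> j" "f i = f j" by (auto simp: inj_def)
  have bs: "replicate i b \<in> lists (r_alph A)" using ab(2) by (simp add: in_lists_conv_set)
  then have "rowj_accepts A (f j) (replicate i b)"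
    using f[of i] equal_powers[of i] \<open>f i = f j\<close> by (simp add: residual_state_def)
  then have "replicate j a @ replicate i b \<in> rowj_lang A"
    using f[of j] bs unfolding residual_state_def by blast
  with \<open>i \<noteq> j\<close> show ?thesis by metis
qed

lemma grlowj_stepE:
  assumes "grlowj_step A (t, p, y) (t', q, y')"
  obtains (jump) x u v where "(p, x, q) \<in> g_rules A" "avoids A p u" "y = u @ x @ v"
      "t' = t @ u" "y' = v"
  | (wrap) "t \<noteq> []" "avoids A p y" "t' = []" "q = p" "y' = t @ y"
  using assms by (cases rule: grlowj_step.cases) (blast intro: that)+

lemma grlowj_step_set_subset:
  "grlowj_step A (t, p, y) (t', q, y') \<Longrightarrow> set (y' @ t') \<subseteq> set (y @ t)"
  by (erule grlowj_stepE) auto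

lemma grlowj_step_jump_unbordered:
  assumes "(p, x, q) \<in> g_rules A" "avoids A p u"
    and unbordered: "\<And>y. y \<noteq> [] \<Longrightarrow> prefix y x \<Longrightarrow> suffix y x \<Longrightarrow> y = x"
  shows "grlowj_step A (t, p, u @ x @ v) (t @ u, q, v)"
proof (rule grlowj_step.jump[OF assms(1,2)])
  show "\<not> (\<exists>u2 x1. u2 \<noteq> [] \<and> x1 \<noteq> [] \<and> suffix u2 u \<and> prefix x1 x \<and> u2 @ x1 = x)"
  proof
    assume "\<exists>u2 x1. u2 \<noteq> [] \<and> x1 \<noteq> [] \<and> suffix u2 u \<and> prefix x1 x \<and> u2 @ x1 = x"
    then obtain u2 x1 where "u2 \<noteq> []" "x1 \<noteq> []" "prefix x1 x" "u2 @ x1 = x" by blast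
    with unbordered[of x1] show False by (auto simp: suffix_def)
  qed
qed

section \<open>Every ROWJFA is a GRLOWJFA\<close>

definition grlowjfa_of :: "('a, 'q) rowjfa \<Rightarrow> ('a, 'q) grlowjfa" where
  "grlowjfa_of A = \<lparr>g_alph = r_alph A, g_states = r_states A, g_start = r_start A,
     g_finals = r_finals A, g_rules = (\<lambda>(p, a, q). (p, [a], q)) ` r_rules A\<rparr>"

lemma g_rules_grlowjfa_of:
  "(p, w, q) \<in> g_rules (grlowjfa_of A) \<longleftrightarrow> (\<exists>a. w = [a] \<and> (p, a, q) \<in> r_rules A)"
  by (force simp: grlowjfa_of_def)

lemma avoids_grlowjfa_of: "avoids (grlowjfa_of A) p u \<longleftrightarrow> set u \<inter> r_sigma A p = {}"
  unfolding avoids_def g_sigma_def r_sigma_def g_rules_grlowjfa_of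
  by (fastforce simp: sublist_singleton_left)

lemma grlowjfa_wf_of: "rowjfa_wf A \<Longrightarrow> grlowjfa_wf (grlowjfa_of A)"
proof -
  assume wf: "rowjfa_wf A"
  then have "finite (r_rules A)"
    unfolding rowjfa_wf_def by (meson finite_SigmaI finite_subset)
  with wf show ?thesis
    by (auto simp: grlowjfa_wf_def rowjfa_wf_def grlowjfa_of_def)
qed

lemma grlowj_step_of_read:
  assumes "(p, c, q) \<in> r_rules A" "set u \<subseteq> r_alph A - r_sigma A p"
  shows "grlowj_step (grlowjfa_of A) (t, p, u @ c # v) (t @ u, q, v)"
  using grlowj_step_jump_unbordered[of p "[c]" q "grlowjfa_of A" u t v] assms
  by (auto simp: g_rules_grlowjfa_of avoids_grlowjfa_of prefix_Cons)

text \<open>The configuration \<open>(t, p, y)\<close> of \<open>grlowjfa_of A\<close> stands for the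
  configuration \<open>(p, y @ t)\<close> of \<open>A\<close>.\<close>

lemma grlowj_simulates_rowj_step:
  assumes "rowj_step A (p, y @ t) (q, w)"
  shows "\<exists>t' y'. w = y' @ t' \<and> (grlowj_step (grlowjfa_of A))\<^sup>*\<^sup>* (t, p, y) (t', q, y')"
proof -
  from assms obtain x c z where read: "(p, c, q) \<in> r_rules A" "set x \<subseteq> r_alph A - r_sigma A p"
      and "y @ t = x @ c # z" "w = z @ x"
    by (cases rule: rowj_step.cases) auto
  from append_eq_append_Cons_split[OF this(3)] show ?thesis
  proof (elim disjE exE conjE)
    fix y' assume "y = x @ c # y'" "z = y' @ t"
    then have "grlowj_step (grlowjfa_of A) (t, p, y) (t @ x, q, y')"
      using grlowj_step_of_read[OF read] by simp
    with \<open>z = y' @ t\<close> \<open>w = z @ x\<close> show ?thesis by auto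
  next
    fix x' assume x': "x = y @ x'" "t = x' @ c # z"
    have "grlowj_step (grlowjfa_of A) (t, p, y) ([], p, t @ y)"
      by (rule grlowj_step.wrap) (use x' read(2) in \<open>auto simp: avoids_grlowjfa_of\<close>)
    moreover have "grlowj_step (grlowjfa_of A) ([], p, x' @ c # (z @ y)) (x', q, z @ y)"
      using grlowj_step_of_read[OF read(1), of x' "[]"] x' read(2) by auto
    ultimately have "(grlowj_step (grlowjfa_of A))\<^sup>*\<^sup>* (t, p, y) (x', q, z @ y)"
      using x' by (auto intro: converse_rtranclp_into_rtranclp)
    with x' \<open>w = z @ x\<close> show ?thesis by (intro exI[of _ x'] exI[of _ "z @ y"]) simp
  qed
qed

lemma grlowj_reaches_if_rowj_reaches:
  "(rowj_step A)\<^sup>*\<^sup>* (p, w) (qf, []) \<Longrightarrow> w = y @ t \<Longrightarrow>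
   (grlowj_step (grlowjfa_of A))\<^sup>*\<^sup>* (t, p, y) ([], qf, [])"
proof (induction arbitrary: t y rule: converse_rtranclp_induct2)
  case (step p w q w')
  with grlowj_simulates_rowj_step obtain t' y' where
    "w' = y' @ t'" "(grlowj_step (grlowjfa_of A))\<^sup>*\<^sup>* (t, p, y) (t', q, y')"
    by metis
  moreover have "(grlowj_step (grlowjfa_of A))\<^sup>*\<^sup>* (t', q, y') ([], qf, [])"
    using step.IH \<open>w' = y' @ t'\<close> by blast
  ultimately show ?case by (meson rtranclp_trans)
qed simp

lemma rowj_accepts_if_grlowj_step:
  assumes "grlowj_step (grlowjfa_of A) (t, p, y) (t', q, y')" "set (y @ t) \<subseteq> r_alph A"
    and "rowj_accepts A q (y' @ t')"
  shows "rowj_accepts A p (y @ t)"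
  using assms(1)
proof (cases rule: grlowj_stepE)
  case (jump x u v)
  then obtain b where b: "x = [b]" "(p, b, q) \<in> r_rules A" by (auto simp: g_rules_grlowjfa_of)
  have "rowj_step A (p, u @ b # (v @ t)) (q, (v @ t) @ u)"
    by (intro rowj_step.intros b(2)) (use jump assms(2) in \<open>auto simp: avoids_grlowjfa_of\<close>)
  with jump b(1) assms(3) show ?thesis
    by (auto simp: rowj_accepts_def intro: converse_rtranclp_into_rtranclp)
next
  case wrap
  with assms(2,3) rowj_accepts_swap_iff[of y A p t] show ?thesis
    by (auto simp: avoids_grlowjfa_of)
qed

lemma rowj_accepts_if_grlowj_reaches:
  "(grlowj_step (grlowjfa_of A))\<^sup>*\<^sup>* (t, p, y) ([], qf, []) \<Longrightarrow> qf \<in> r_finals A \<Longrightarrow>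
   set (y @ t) \<subseteq> r_alph A \<Longrightarrow> rowj_accepts A p (y @ t)"
proof (induction "(t, p, y)" arbitrary: t p y rule: converse_rtranclp_induct)
  case base
  then show ?case by (auto simp: rowj_accepts_def)
next
  case (step c')
  obtain t' q y' where c': "c' = (t', q, y')" by (cases c')
  with step grlowj_step_set_subset[of "grlowjfa_of A" t p y t' q y'] show ?case
    by (metis order_trans rowj_accepts_if_grlowj_step)
qed

lemma grlowj_lang_of: "grlowj_lang (grlowjfa_of A) = rowj_lang A"
proof (intro set_eqI iffI)
  fix w assume "w \<in> rowj_lang A"
  then show "w \<in> grlowj_lang (grlowjfa_of A)"
    using grlowj_reaches_if_rowj_reaches[of A _ w _ w "[]"]
    by (auto simp: rowj_lang_def grlowj_lang_def grlowjfa_of_def)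
next
  fix w assume "w \<in> grlowj_lang (grlowjfa_of A)"
  then show "w \<in> rowj_lang A"
    using rowj_accepts_if_grlowj_reaches[of A "[]" _ w]
    by (auto simp: rowj_lang_iff_accepts grlowj_lang_def grlowjfa_of_def in_lists_conv_set)
qed

section \<open>The witness: deleting \<open>01\<close>\<close>

definition G01 :: "(nat, nat) grlowjfa" where
  "G01 = \<lparr>g_alph = {0, 1}, g_states = {0}, g_start = 0, g_finals = {0},
     g_rules = {(0, [0, 1], 0)}\<rparr>"

lemma grlowjfa_wf_G01: "grlowjfa_wf G01"
  by (auto simp: grlowjfa_wf_def G01_def)

lemma avoids_G01: "avoids G01 0 u \<longleftrightarrow> \<not> sublist [0, 1] u"
  by (auto simp: avoids_def g_sigma_def G01_def)

lemma grlowj_step_G01_delete: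
  assumes "\<not> sublist [0, 1] u"
  shows "grlowj_step G01 (t, 0, u @ [0, 1] @ v) (t @ u, 0, v)"
proof (rule grlowj_step_jump_unbordered)
  show "(0, [0, 1], 0) \<in> g_rules G01" by (simp add: G01_def)
  show "avoids G01 0 u" using assms by (simp add: avoids_G01)
  show "y = [0, 1]" if "y \<noteq> []" "prefix y [0, 1]" "suffix y [0, 1]" for y :: "nat list"
    using that by (auto simp: prefix_Cons suffix_def Cons_eq_append_conv)
qed

lemma replicate_in_grlowj_lang_G01: "replicate n 0 @ replicate n 1 \<in> grlowj_lang G01"
proof -
  have "(grlowj_step G01)\<^sup>*\<^sup>* ([], 0, replicate n 0 @ replicate n 1) ([], 0, [])"
  proof (induction n)
    case (Suc n)
    let ?zeros = "replicate n (0 :: nat)" and ?ones = "replicate n (1 :: nat)"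
    have "\<not> sublist [0, 1] ?zeros" "\<not> sublist [0, 1] ?ones" by (auto dest: set_mono_sublist)
    then have jump: "grlowj_step G01 ([], 0, replicate (Suc n) 0 @ replicate (Suc n) 1) (?zeros, 0, ?ones)"
      using grlowj_step_G01_delete[of ?zeros "[]" ?ones] by (simp add: replicate_app_Cons_same)
    have "(grlowj_step G01)\<^sup>*\<^sup>* (?zeros, 0, ?ones) ([], 0, ?zeros @ ?ones)"
      using grlowj_step.wrap[of ?zeros G01 0 ?ones] \<open>\<not> sublist [0, 1] ?ones\<close>
      by (cases n) (auto simp: avoids_G01)
    with jump Suc.IH show ?case
      by (meson converse_rtranclp_into_rtranclp rtranclp_trans)
  qed simp
  then show ?thesis by (auto simp: grlowj_lang_def G01_def)
qed

definition balanced :: "nat list \<Rightarrow> bool" where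
  "balanced w \<longleftrightarrow> count_list w 0 = count_list w 1 \<and>
     (\<forall>r. prefix r w \<longrightarrow> count_list r 1 \<le> count_list r 0)"

lemma balanced_insert_01:
  assumes "balanced (u @ v)"
  shows "balanced (u @ [0, 1] @ v)"
proof -
  from assms have prefixes: "count_list r 1 \<le> count_list r 0" if "prefix r (u @ v)" for r
    using that by (simp add: balanced_def)
  have "count_list r 1 \<le> count_list r 0" if "prefix r (u @ [0, 1] @ v)" for r
  proof -
    from that consider "prefix r u" | "r = u @ [0]" | v' where "r = u @ [0, 1] @ v'" "prefix v' v"
      by (auto simp: prefix_append prefix_Cons)
    then show ?thesis
    proof cases
      case 1
      then show ?thesis using prefixes[of r] by (simp add: prefix_prefix)
    next
      case 2
      then show ?thesis using prefixes[of u] by simp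
    next
      case 3
      then show ?thesis using prefixes[of "u @ v'"] by simp
    qed
  qed
  with assms show ?thesis by (simp add: balanced_def)
qed

lemma balanced_if_grlowj_G01_reaches:
  "(grlowj_step G01)\<^sup>*\<^sup>* (t, p, y) ([], q, []) \<Longrightarrow> balanced (t @ y)"
proof (induction "(t, p, y)" arbitrary: t p y rule: converse_rtranclp_induct)
  case base
  then show ?case by (simp add: balanced_def)
next
  case (step c')
  obtain t' p' y' where c': "c' = (t', p', y')" by (cases c')
  with step.hyps(1) have "grlowj_step G01 (t, p, y) (t', p', y')" by simp
  then show ?case
  proof (cases rule: grlowj_stepE)
    case (jump x u v)
    then show ?thesis
      using step.hyps(3) c' balanced_insert_01[of "t @ u" v] by (auto simp: G01_def)
  qed (use step.hyps(3) c' in simp)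
qed

lemma grlowj_lang_G01_balanced: "w \<in> grlowj_lang G01 \<Longrightarrow> balanced w"
  using balanced_if_grlowj_G01_reaches[of "[]" _ w] by (auto simp: grlowj_lang_def)

lemma balanced_replicate: "balanced (replicate i 0 @ replicate j 1) \<Longrightarrow> i = j"
  by (simp add: balanced_def count_list_replicate)

lemma not_balanced_overshoot: "\<not> balanced (replicate i 0 @ replicate (Suc i) 1 @ [0])"
proof
  let ?r = "replicate i 0 @ replicate (Suc i) (1 :: nat)"
  assume "balanced (replicate i 0 @ replicate (Suc i) 1 @ [0])"
  then have "count_list ?r 1 \<le> count_list ?r 0"
    unfolding balanced_def by (metis prefixI append.assoc)
  then show False by (simp add: count_list_replicate)
qed

lemma ROWJ_subset_GRLOWJ: "(ROWJ :: 'a list set set) \<subseteq> GRLOWJ"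
proof
  fix L :: "'a list set" assume "L \<in> ROWJ"
  then obtain A :: "('a, nat) rowjfa" where "rowjfa_wf A" "L = rowj_lang A"
    by (auto simp: ROWJ_def)
  then show "L \<in> GRLOWJ"
    unfolding GRLOWJ_def
    by (auto intro!: exI[of _ "grlowjfa_of A"] grlowjfa_wf_of simp: grlowj_lang_of)
qed

lemma grlowj_lang_G01_not_ROWJ: "grlowj_lang G01 \<notin> ROWJ"
proof
  assume "grlowj_lang G01 \<in> ROWJ"
  then obtain A :: "(nat, nat) rowjfa" where wf: "rowjfa_wf A" and L: "rowj_lang A = grlowj_lang G01"
    by (auto simp: ROWJ_def)
  have "\<exists>i j. i \<noteq> j \<and> replicate i 0 @ replicate j 1 \<in> grlowj_lang G01"
    unfolding L[symmetric]
  proof (rule rowj_lang_unequal_powers[OF wf])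
    show "replicate n 0 @ replicate n 1 \<in> rowj_lang A" for n
      unfolding L by (rule replicate_in_grlowj_lang_G01)
    show "replicate i 0 @ replicate (Suc i) 1 @ [0] \<notin> rowj_lang A" for i
      unfolding L using grlowj_lang_G01_balanced not_balanced_overshoot by blast
  qed
  then show False using grlowj_lang_G01_balanced balanced_replicate by blast
qed

theorem lemma1:
  shows "(\<exists>L. L \<in> (GRLOWJ :: nat list set set) \<and> L \<notin> ROWJ) \<and>
         (ROWJ :: nat list set set) \<subset> GRLOWJ"
proof -
  have "grlowj_lang G01 \<in> GRLOWJ"
    unfolding GRLOWJ_def using grlowjfa_wf_G01 by blast
  with grlowj_lang_G01_not_ROWJ ROWJ_subset_GRLOWJ show ?thesis by blast
qed

end
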